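(* Let $D$ be a dataset over categorical attributes $A_1,\dots,A_m$ and a metric attribute $M$, let $V$ be a record, let $f_M$ be a deterministic outlier verification function, and let $\epsilon_1>0$. Let $u$ be a utility function on contexts of sensitivity $\Delta u\le 1$: either $u_V(D,C)=|D_C|$ (context population size) or $u_V(D,C)=|D_C\cap D_{C_V}|$ for a fixed starting context $C_V$, with $u_V(D,C)=-\infty$ whenever $f_M(D_C,V)=\mathrm{false}$. Consider the Direct Approach algorithm: enumerate all $2^t$ contexts $C$, collect into $C_M$ those with $f_M(D_C,V)=\mathrm{true}$, and output $\mathrm{Exp}^{\epsilon_1}_u(D,C_M)$. Then this algorithm satisfies $(2\epsilon_1,\ COE_M(\cdot,V))$-Output Constrained Differential Privacy.
   Context: Attribute $A_i$ has a finite domain of size $|A_i|$ (all possible values, whether or not they occur in $D$); $t=\sum_{i=1}^m|A_i|$. A context is a binary vector $C=\langle c_{11},\dots,c_{1|A_1|},\dots,c_{m1},\dots,c_{m|A_m|}\rangle$ of length $t$, where $c_{ij}=1$ means the $j$-th value of $A_i$ is selected. The population $D_C$ is the set of tuples of $D$ whose value in each $A_i$ is one of the values selected for $A_i$ in $C$. An outlier verification function $f_M(D_C,V)$ returns true iff $V$ is an outlier in $D_C$ with respect to $M$ according to a fixed deterministic outlier detection algorithm. $COE_M(D,V)$ is the set of all contexts $C$ with $V\in D_C$ and $f_M(D_C,V)=\mathrm{true}$ (matching contexts). The sensitivity of $u$ is $\Delta u=\max|u(D_1,r)-u(D_2,r)|$ over neighboring datasets $D_1,D_2$ (differing by adding/removing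 one record) and all outputs $r$. The Exponential mechanism $\mathrm{Exp}^{\epsilon}_u(D,\mathcal R)$ outputs $r\in\mathcal R$ with probability $\exp(\epsilon u(D,r)/(2\Delta u))/\sum_{r'\in\mathcal R}\exp(\epsilon u(D,r')/(2\Delta u))$. Datasets $D_1,D_2$ are $f$-neighbors if they differ by adding/removing one record and $f(D_1)=f(D_2)\neq\emptyset$. A randomized mechanism $\mathcal M$ satisfies $(\epsilon,f)$-Output Constrained Differential Privacy if for all $f$-neighbors $D_1,D_2$ and all sets $S$ of outputs, $\Pr[\mathcal M(D_1)\in S]\le e^{\epsilon}\Pr[\mathcal M(D_2)\in S]$. *)

theory Defs
  imports "HOL-Probability.Probability" "HOL-Library.Multiset"
begin

text \<open>The categorical attributes are
  A_0,...,A_{m-1} with m = length sz; attribute A_i has domain {0..<sz!i}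
  (values are indexed), and attr r i is the (index of the) value of record r in A_i.
  The metric attribute M is part of the record and is only accessed by the
  outlier detection algorithm.\<close>

type_synonym ctxt = "nat \<Rightarrow> nat \<Rightarrow> bool"

definition valid_dataset :: "nat list \<Rightarrow> ('r \<Rightarrow> nat \<Rightarrow> nat) \<Rightarrow> 'r multiset \<Rightarrow> bool" where
  "valid_dataset sz attr D \<longleftrightarrow> (\<forall>r\<in>#D. \<forall>i<length sz. attr r i < sz ! i)"

text \<open>Contexts: binary vectors of length t = sum of the domain sizes, represented as
  c i j (the j-th value of A_i selected), false outside the index range.\<close>
definition contexts :: "nat list \<Rightarrow> ctxt set" where
  "contexts sz = {C. \<forall>i j. C i j \<longrightarrow> i < length sz \<and> j < sz ! i}"

definition pop :: "nat list \<Rightarrow> ('r \<Rightarrow> nat \<Rightarrow> nat) \<Rightarrow> 'r multiset \<Rightarrow> ctxt \<Rightarrow> 'r multiset" where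
  "pop sz attr D C = filter_mset (\<lambda>r. \<forall>i<length sz. C i (attr r i)) D"

text \<open>Outlier verification function f_M(P,V): true iff V is an outlier in P w.r.t. M
  according to the fixed deterministic algorithm alg (being an outlier of P
  presupposes membership in P).\<close>
definition fM :: "('r multiset \<Rightarrow> 'r \<Rightarrow> bool) \<Rightarrow> 'r multiset \<Rightarrow> 'r \<Rightarrow> bool" where
  "fM alg P V \<longleftrightarrow> V \<in># P \<and> alg P V"

definition COE :: "nat list \<Rightarrow> ('r \<Rightarrow> nat \<Rightarrow> nat) \<Rightarrow> ('r multiset \<Rightarrow> 'r \<Rightarrow> bool)
    \<Rightarrow> 'r multiset \<Rightarrow> 'r \<Rightarrow> ctxt set" where
  "COE sz attr alg D V = {C \<in> contexts sz. V \<in># pop sz attr D C \<and> fM alg (pop sz attr D C) V}"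

definition neighbors :: "'r multiset \<Rightarrow> 'r multiset \<Rightarrow> bool" where
  "neighbors D1 D2 \<longleftrightarrow> (\<exists>x. D2 = D1 + {#x#}) \<or> (\<exists>x. D1 = D2 + {#x#})"

definition sensitivity :: "nat list \<Rightarrow> ('r \<Rightarrow> nat \<Rightarrow> nat)
    \<Rightarrow> ('r multiset \<Rightarrow> ctxt \<Rightarrow> real) \<Rightarrow> real" where
  "sensitivity sz attr u = Sup {\<bar>u D1 C - u D2 C\<bar> | D1 D2 C.
      valid_dataset sz attr D1 \<and> valid_dataset sz attr D2 \<and> neighbors D1 D2 \<and> C \<in> contexts sz}"

definition exp_mech :: "real \<Rightarrow> ('d \<Rightarrow> 'o \<Rightarrow> real) \<Rightarrow> real \<Rightarrow> 'd \<Rightarrow> 'o set \<Rightarrow> 'o pmf" where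
  "exp_mech \<epsilon> u \<Delta> D R = embed_pmf (\<lambda>r. if r \<in> R then
      exp (\<epsilon> * u D r / (2 * \<Delta>)) / (\<Sum>r'\<in>R. exp (\<epsilon> * u D r' / (2 * \<Delta>))) else 0)"

definition direct_approach :: "nat list \<Rightarrow> ('r \<Rightarrow> nat \<Rightarrow> nat) \<Rightarrow> ('r multiset \<Rightarrow> 'r \<Rightarrow> bool)
    \<Rightarrow> 'r \<Rightarrow> real \<Rightarrow> ('r multiset \<Rightarrow> ctxt \<Rightarrow> real) \<Rightarrow> 'r multiset \<Rightarrow> ctxt pmf" where
  "direct_approach sz attr alg V \<epsilon>1 u D =
     exp_mech \<epsilon>1 u (sensitivity sz attr u) D
       {C \<in> contexts sz. fM alg (pop sz attr D C) V}"

definition f_neighbors :: "nat list \<Rightarrow> ('r \<Rightarrow> nat \<Rightarrow> nat) \<Rightarrow> ('r multiset \<Rightarrow> 'o set)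
    \<Rightarrow> 'r multiset \<Rightarrow> 'r multiset \<Rightarrow> bool" where
  "f_neighbors sz attr f D1 D2 \<longleftrightarrow> valid_dataset sz attr D1 \<and> valid_dataset sz attr D2 \<and>
     neighbors D1 D2 \<and> f D1 = f D2 \<and> f D1 \<noteq> {}"

definition OCDP :: "nat list \<Rightarrow> ('r \<Rightarrow> nat \<Rightarrow> nat) \<Rightarrow> real \<Rightarrow> ('r multiset \<Rightarrow> 'o set)
    \<Rightarrow> ('r multiset \<Rightarrow> 'p pmf) \<Rightarrow> bool" where
  "OCDP sz attr \<epsilon> f M \<longleftrightarrow> (\<forall>D1 D2 S. f_neighbors sz attr f D1 D2 \<longrightarrow>
      measure_pmf.prob (M D1) S \<le> exp \<epsilon> * measure_pmf.prob (M D2) S)"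

end

theory Submission
  imports Defs
begin

text \<open>The candidate set of the Direct Approach on D is exactly COE(D,V), so on f-neighbours
  D1, D2 both runs are exponential mechanisms over the same finite output set. The counting
  utilities change by at most one between neighbouring datasets, hence their sensitivity is
  finite and bounds every utility difference; the usual exponential-mechanism estimate then
  bounds each output probability ratio by e^\<epsilon>1, which is at most e^(2\<epsilon>1).\<close>

lemma finite_contexts: "finite (contexts sz)"
proof -
  let ?A = "SIGMA i:{..<length sz}. {..<sz!i}"
  have "contexts sz \<subseteq> (\<lambda>S i j. (i, j) \<in> S) ` Pow ?A"
  proof
    fix C assume "C \<in> contexts sz"
    then have "{(i, j). C i j} \<in> Pow ?A" by (auto simp: contexts_def)
    moreover have "C = (\<lambda>i j. (i, j) \<in> {(i, j). C i j})" by simp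
    ultimately show "C \<in> (\<lambda>S i j. (i, j) \<in> S) ` Pow ?A" by blast
  qed
  then show ?thesis by (rule finite_subset) auto
qed

lemma neighbors_size_filter_mset_diff:
  assumes "neighbors D1 D2"
  shows "\<bar>real (size (filter_mset P D1)) - real (size (filter_mset P D2))\<bar> \<le> 1"
  using assms unfolding neighbors_def by auto

lemma pop_inter_pop:
  "pop sz attr D C \<inter># pop sz attr D C' =
     filter_mset (\<lambda>r. (\<forall>i<length sz. C i (attr r i)) \<and> (\<forall>i<length sz. C' i (attr r i))) D"
  unfolding pop_def by (rule multiset_eqI) auto

lemma counting_utility_neighbors_diff:
  assumes "u = (\<lambda>D C. real (size (pop sz attr D C))) \<or>
         (\<exists>CV \<in> contexts sz. u = (\<lambda>D C. real (size (pop sz attr D C \<inter># pop sz attr D CV))))"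
    and "neighbors D1 D2"
  shows "\<bar>u D1 C - u D2 C\<bar> \<le> 1"
  using assms unfolding pop_inter_pop
  by (auto simp: pop_def intro: neighbors_size_filter_mset_diff)

lemma abs_diff_le_sensitivity:
  assumes bounded: "\<And>D1 D2 C. neighbors D1 D2 \<Longrightarrow> \<bar>u D1 C - u D2 C\<bar> \<le> B"
    and "valid_dataset sz attr D1" "valid_dataset sz attr D2" "neighbors D1 D2"
    and "C \<in> contexts sz"
  shows "\<bar>u D1 C - u D2 C\<bar> \<le> sensitivity sz attr u"
  unfolding sensitivity_def
proof (rule cSup_upper)
  show "\<bar>u D1 C - u D2 C\<bar> \<in> {\<bar>u D1 C - u D2 C\<bar> | D1 D2 C. valid_dataset sz attr D1 \<and>
      valid_dataset sz attr D2 \<and> neighbors D1 D2 \<and> C \<in> contexts sz}"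
    using assms by blast
  show "bdd_above {\<bar>u D1 C - u D2 C\<bar> | D1 D2 C. valid_dataset sz attr D1 \<and>
      valid_dataset sz attr D2 \<and> neighbors D1 D2 \<and> C \<in> contexts sz}"
    using bounded by (auto intro!: bdd_aboveI[of _ B])
qed

lemma pmf_exp_mech:
  assumes "finite R" "R \<noteq> {}"
  shows "pmf (exp_mech \<epsilon> u \<Delta> D R) r = (if r \<in> R then
      exp (\<epsilon> * u D r / (2 * \<Delta>)) / (\<Sum>r'\<in>R. exp (\<epsilon> * u D r' / (2 * \<Delta>))) else 0)"
proof -
  define w where "w = (\<lambda>r. exp (\<epsilon> * u D r / (2 * \<Delta>)))"
  define g where "g = (\<lambda>r. if r \<in> R then w r / sum w R else 0)"
  have Z: "sum w R > 0"
    using assms by (auto simp: w_def intro: sum_pos)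
  have "(\<integral>\<^sup>+r. ennreal (g r) \<partial>count_space UNIV) = (\<Sum>r\<in>R. ennreal (g r))"
    using assms(1) by (intro nn_integral_count_space') (auto simp: g_def)
  also have "\<dots> = ennreal (\<Sum>r\<in>R. w r / sum w R)"
    using Z by (subst sum_ennreal) (auto simp: g_def w_def)
  also have "\<dots> = 1"
    using Z by (simp flip: sum_divide_distrib)
  finally have "pmf (embed_pmf g) r = g r"
    using Z by (intro pmf_embed_pmf) (auto simp: g_def w_def)
  moreover have "exp_mech \<epsilon> u \<Delta> D R = embed_pmf g"
    unfolding exp_mech_def g_def w_def ..
  ultimately show ?thesis
    by (simp add: g_def w_def)
qed

lemma exp_div_sum_exp_le:
  fixes a b :: "'a \<Rightarrow> real"
  assumes "finite R" "r \<in> R" and close: "\<And>x. x \<in> R \<Longrightarrow> \<bar>a x - b x\<bar> \<le> c"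
  shows "exp (a r) / (\<Sum>x\<in>R. exp (a x)) \<le> exp (2 * c) * (exp (b r) / (\<Sum>x\<in>R. exp (b x)))"
proof -
  have exp_le: "exp (f x) \<le> exp c * exp (g x)"
    if "x \<in> R" "\<bar>f x - g x\<bar> \<le> c" for f g :: "'a \<Rightarrow> real" and x
    using that by (simp flip: exp_add)
  have Za: "(\<Sum>x\<in>R. exp (a x)) > 0" and Zb: "(\<Sum>x\<in>R. exp (b x)) > 0"
    using assms by (auto intro: sum_pos)
  have "(\<Sum>x\<in>R. exp (b x)) \<le> (\<Sum>x\<in>R. exp c * exp (a x))"
    using close by (intro sum_mono exp_le) (auto simp: abs_minus_commute)
  then have Zb_le: "(\<Sum>x\<in>R. exp (b x)) \<le> exp c * (\<Sum>x\<in>R. exp (a x))"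
    by (simp add: sum_distrib_left)
  have "exp (a r) / (\<Sum>x\<in>R. exp (a x)) \<le> exp c * exp (b r) / (\<Sum>x\<in>R. exp (a x))"
    using Za close assms(2) by (intro divide_right_mono exp_le) auto
  also have "\<dots> = exp c * exp c * exp (b r) / (exp c * (\<Sum>x\<in>R. exp (a x)))"
    by simp
  also have "\<dots> \<le> exp c * exp c * exp (b r) / (\<Sum>x\<in>R. exp (b x))"
    using Zb Zb_le by (intro divide_left_mono) auto
  finally show ?thesis
    by (simp add: mult_exp_exp)
qed

lemma pmf_exp_mech_le:
  assumes "finite R" "R \<noteq> {}" "\<epsilon> \<ge> 0" "\<Delta> \<ge> 0"
    and close: "\<And>r. r \<in> R \<Longrightarrow> \<bar>u D1 r - u D2 r\<bar> \<le> \<Delta>"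
  shows "pmf (exp_mech \<epsilon> u \<Delta> D1 R) r \<le> exp \<epsilon> * pmf (exp_mech \<epsilon> u \<Delta> D2 R) r"
proof (cases "r \<in> R")
  case True
  have "\<bar>\<epsilon> * u D1 x / (2 * \<Delta>) - \<epsilon> * u D2 x / (2 * \<Delta>)\<bar> \<le> \<epsilon> / 2" if "x \<in> R" for x
  proof (cases "\<Delta> = 0")
    case False
    have "\<bar>\<epsilon> * u D1 x / (2 * \<Delta>) - \<epsilon> * u D2 x / (2 * \<Delta>)\<bar> = \<epsilon> * \<bar>u D1 x - u D2 x\<bar> / (2 * \<Delta>)"
      using assms(3,4) by (simp add: abs_divide abs_mult flip: diff_divide_distrib right_diff_distrib)
    also have "\<dots> \<le> \<epsilon> * \<Delta> / (2 * \<Delta>)"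
      using assms(3,4) close[OF that] by (intro divide_right_mono mult_left_mono) auto
    finally show ?thesis
      using False by simp
  qed (use assms(3) in simp)
  from exp_div_sum_exp_le[OF assms(1) True this] show ?thesis
    using True assms(1,2) by (simp add: pmf_exp_mech)
qed (use assms(1,2) in \<open>simp add: pmf_exp_mech\<close>)

lemma measure_pmf_prob_le_of_pmf_le:
  assumes "\<And>x. pmf p x \<le> c * pmf q x"
  shows "measure_pmf.prob p S \<le> c * measure_pmf.prob q S"
proof -
  have "measure_pmf.prob p S = infsetsum (pmf p) S"
    by (rule measure_pmf_conv_infsetsum)
  also have "\<dots> \<le> infsetsum (\<lambda>x. c * pmf q x) S"
    using assms by (intro infsetsum_mono abs_summable_on_cmult_right) auto
  also have "\<dots> = c * measure_pmf.prob q S"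
    by (subst infsetsum_cmult_right) (auto simp: measure_pmf_conv_infsetsum)
  finally show ?thesis .
qed

lemma direct_approach_eq_exp_mech_COE:
  "direct_approach sz attr alg V \<epsilon> u D =
     exp_mech \<epsilon> u (sensitivity sz attr u) D (COE sz attr alg D V)"
proof -
  have "{C \<in> contexts sz. fM alg (pop sz attr D C) V} = COE sz attr alg D V"
    by (auto simp: COE_def fM_def)
  then show ?thesis
    by (simp add: direct_approach_def)
qed

lemma OCDP_mono:
  assumes "OCDP sz attr \<epsilon> f M" "\<epsilon> \<le> \<epsilon>'"
  shows "OCDP sz attr \<epsilon>' f M"
  unfolding OCDP_def
proof (intro allI impI)
  fix D1 D2 S
  assume "f_neighbors sz attr f D1 D2"
  then have "measure_pmf.prob (M D1) S \<le> exp \<epsilon> * measure_pmf.prob (M D2) S"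
    using assms(1) by (simp add: OCDP_def)
  also have "\<dots> \<le> exp \<epsilon>' * measure_pmf.prob (M D2) S"
    using assms(2) by (intro mult_right_mono) auto
  finally show "measure_pmf.prob (M D1) S \<le> exp \<epsilon>' * measure_pmf.prob (M D2) S" .
qed

lemma direct_approach_OCDP:
  assumes "\<epsilon> \<ge> 0"
    and bounded: "\<And>D1 D2 C. neighbors D1 D2 \<Longrightarrow> \<bar>u D1 C - u D2 C\<bar> \<le> B"
  shows "OCDP sz attr \<epsilon> (\<lambda>D. COE sz attr alg D V) (direct_approach sz attr alg V \<epsilon> u)"
  unfolding OCDP_def direct_approach_eq_exp_mech_COE
proof (intro allI impI)
  fix D1 D2 S
  assume "f_neighbors sz attr (\<lambda>D. COE sz attr alg D V) D1 D2"
  then have valid: "valid_dataset sz attr D1" "valid_dataset sz attr D2" "neighbors D1 D2"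
    and same_COE: "COE sz attr alg D2 V = COE sz attr alg D1 V"
    and nonempty: "COE sz attr alg D1 V \<noteq> {}"
    by (auto simp: f_neighbors_def)
  define R where "R = COE sz attr alg D1 V"
  define \<Delta> where "\<Delta> = sensitivity sz attr u"
  have finite: "finite R"
    unfolding R_def COE_def by (rule finite_subset[OF _ finite_contexts]) auto
  have diff_le: "\<bar>u D1 C - u D2 C\<bar> \<le> \<Delta>" if "C \<in> R" for C
    using that valid unfolding R_def \<Delta>_def COE_def
    by (intro abs_diff_le_sensitivity[OF bounded]) auto
  with nonempty have "\<Delta> \<ge> 0"
    unfolding R_def by (meson abs_ge_zero all_not_in_conv order_trans)
  with finite nonempty diff_le assms(1)
  have "pmf (exp_mech \<epsilon> u \<Delta> D1 R) x \<le> exp \<epsilon> * pmf (exp_mech \<epsilon> u \<Delta> D2 R) x" for x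
    unfolding R_def by (intro pmf_exp_mech_le) auto
  then show "measure_pmf.prob (exp_mech \<epsilon> u (sensitivity sz attr u) D1 (COE sz attr alg D1 V)) S
      \<le> exp \<epsilon> * measure_pmf.prob (exp_mech \<epsilon> u (sensitivity sz attr u) D2 (COE sz attr alg D2 V)) S"
    unfolding same_COE R_def \<Delta>_def by (rule measure_pmf_prob_le_of_pmf_le)
qed

theorem theorem2:
  fixes sz :: "nat list" and attr :: "'r \<Rightarrow> nat \<Rightarrow> nat"
    and alg :: "'r multiset \<Rightarrow> 'r \<Rightarrow> bool" and V :: 'r and \<epsilon>1 :: real
    and u :: "'r multiset \<Rightarrow> ctxt \<Rightarrow> real"
  assumes "\<epsilon>1 > 0"
    and "u = (\<lambda>D C. real (size (pop sz attr D C))) \<or>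
         (\<exists>CV \<in> contexts sz. u = (\<lambda>D C. real (size (pop sz attr D C \<inter># pop sz attr D CV))))"
    and "sensitivity sz attr u \<le> 1"
  shows "OCDP sz attr (2 * \<epsilon>1) (\<lambda>D. COE sz attr alg D V) (direct_approach sz attr alg V \<epsilon>1 u)"
proof -
  \<comment> \<open>The mechanism is normalised by the exact sensitivity.\<close>
  have "OCDP sz attr \<epsilon>1 (\<lambda>D. COE sz attr alg D V) (direct_approach sz attr alg V \<epsilon>1 u)"
    using assms(1) counting_utility_neighbors_diff[OF assms(2)]
    by (intro direct_approach_OCDP) auto
  then show ?thesis
    by (rule OCDP_mono) (use assms(1) in simp)
qed

end
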